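(* Let $n\ge2$ and let $\mathbf{Z}^*$, $\mathbf{m}$, $\mathbf{S}$, $\mathbf{D}$ be as in the context. Then the partial maxima BLUE of $\theta_2$ has the form \[ L_2=\frac{\mathbf{m}'\mathbf{S}^{-1}\mathbf{Z}^*}{\mathbf{m}'\mathbf{S}^{-1}\mathbf{m}},\qquad\text{with}\qquad \operatorname{Var}[L_2]=\frac{\theta_2^2}{\mathbf{m}'\mathbf{S}^{-1}\mathbf{m}}, \] and the partial maxima BLIE of $\theta_2$ has the form \[ T_2=\mathbf{m}'\mathbf{D}^{-1}\mathbf{Z}^*,\qquad\text{with}\qquad \mathrm{MSE}[T_2]=(1-\mathbf{m}'\mathbf{D}^{-1}\mathbf{m})\theta_2^2. \]
   Context: $F$ is a known, parameter-free, non-degenerate distribution function on $\mathbb{R}$ with finite variance. For unknown $\theta_1\in\mathbb{R}$, $\theta_2>0$, $X_1^*,\dots,X_n^*$ are i.i.d. with distribution function $F((x-\theta_1)/\theta_2)$ and $X^*_{j:j}=\max\{X_1^*,\dots,X_j^*\}$; $X_1,\dots,X_n$ are i.i.d. from $F$ and $X_{j:j}=\max\{X_1,\dots,X_j\}$. Partial maxima spacings: $Z_i^*=X^*_{i+1:i+1}-X^*_{i:i}$, $Z_i=X_{i+1:i+1}-X_{i:i}$, $i=1,\dots,n-1$; $\mathbf{Z}^*=(Z_1^*,\dots,Z^*_{n-1})'$, $\mathbf{Z}=(Z_1,\dots,Z_{n-1})'$, $\mathbf{m}=\mathbb{E}[\mathbf{Z}]$, $\mathbf{S}$ the covariance matrix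 of $\mathbf{Z}$, $\mathbf{D}=\mathbb{E}[\mathbf{Z}\mathbf{Z}']$ (both positive definite). Linear estimators are $\sum_i c_iX^*_{i:i}$ with constant $c_i$. The BLUE of $\theta_2$ is the linear estimator unbiased for $\theta_2$ for all $(\theta_1,\theta_2)$ with minimum variance. A linear statistic $L=\mathbf{c}'\mathbf{X}^*$ is invariant for $\theta_2$ if $L(b\mathbf{X}^*+a\mathbf{1})=bL(\mathbf{X}^* )$ for all $a\in\mathbb{R}$, $b>0$; the BLIE of $\theta_2$ minimizes $\mathbb{E}[L-\theta_2]^2$ among such statistics. *)

theory Defs
  imports "HOL-Probability.Probability" "Jordan_Normal_Form.Gauss_Jordan_Elimination"
begin

definition pmax :: "nat \<Rightarrow> (nat \<Rightarrow> real) \<Rightarrow> real" where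
  "pmax j x = Max (x ` {1..j})"

text \<open>Law of the sample X*_1..X*_n: i.i.d. with distribution function F((x-a)/b),
  where M is the law with distribution function F.\<close>
definition sample_law :: "nat \<Rightarrow> real measure \<Rightarrow> real \<Rightarrow> real \<Rightarrow> (nat \<Rightarrow> real) measure" where
  "sample_law n M a b = PiM {1..n} (\<lambda>_. distr M borel (\<lambda>x. a + b * x))"

definition Ex :: "nat \<Rightarrow> real measure \<Rightarrow> real \<Rightarrow> real \<Rightarrow> ((nat \<Rightarrow> real) \<Rightarrow> real) \<Rightarrow> real" where
  "Ex n M a b g = integral\<^sup>L (sample_law n M a b) g"

definition Var :: "nat \<Rightarrow> real measure \<Rightarrow> real \<Rightarrow> real \<Rightarrow> ((nat \<Rightarrow> real) \<Rightarrow> real) \<Rightarrow> real" where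
  "Var n M a b g = Ex n M a b (\<lambda>\<omega>. (g \<omega> - Ex n M a b g)\<^sup>2)"

definition MSE2 :: "nat \<Rightarrow> real measure \<Rightarrow> real \<Rightarrow> real \<Rightarrow> ((nat \<Rightarrow> real) \<Rightarrow> real) \<Rightarrow> real" where
  "MSE2 n M a b g = Ex n M a b (\<lambda>\<omega>. (g \<omega> - b)\<^sup>2)"

definition linform :: "nat \<Rightarrow> (nat \<Rightarrow> real) \<Rightarrow> (nat \<Rightarrow> real) \<Rightarrow> real" where
  "linform n c y = (\<Sum>j\<in>{1..n}. c j * y j)"

definition linest :: "nat \<Rightarrow> (nat \<Rightarrow> real) \<Rightarrow> (nat \<Rightarrow> real) \<Rightarrow> real" where
  "linest n c \<omega> = linform n c (\<lambda>j. pmax j \<omega>)"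

definition unbiased2 :: "nat \<Rightarrow> real measure \<Rightarrow> (nat \<Rightarrow> real) \<Rightarrow> bool" where
  "unbiased2 n M c \<longleftrightarrow> (\<forall>a b. b > 0 \<longrightarrow> Ex n M a b (linest n c) = b)"

definition is_BLUE2 :: "nat \<Rightarrow> real measure \<Rightarrow> (nat \<Rightarrow> real) \<Rightarrow> bool" where
  "is_BLUE2 n M c \<longleftrightarrow> unbiased2 n M c \<and>
     (\<forall>d. unbiased2 n M d \<longrightarrow>
        (\<forall>a b. b > 0 \<longrightarrow> Var n M a b (linest n c) \<le> Var n M a b (linest n d)))"

definition invariant2 :: "nat \<Rightarrow> (nat \<Rightarrow> real) \<Rightarrow> bool" where
  "invariant2 n c \<longleftrightarrow>
     (\<forall>y a b. b > 0 \<longrightarrow> linform n c (\<lambda>j. b * y j + a) = b * linform n c y)"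

definition is_BLIE2 :: "nat \<Rightarrow> real measure \<Rightarrow> (nat \<Rightarrow> real) \<Rightarrow> bool" where
  "is_BLIE2 n M c \<longleftrightarrow> invariant2 n c \<and>
     (\<forall>d. invariant2 n d \<longrightarrow>
        (\<forall>a b. b > 0 \<longrightarrow> MSE2 n M a b (linest n c) \<le> MSE2 n M a b (linest n d)))"

text \<open>Spacings vector (y_2-y_1, ..., y_n-y_{n-1}) as a JNF vector of dimension n-1
  (0-based: entry i is y_{i+2} - y_{i+1}).\<close>
definition spacings :: "nat \<Rightarrow> (nat \<Rightarrow> real) \<Rightarrow> real vec" where
  "spacings n y = vec (n - 1) (\<lambda>i. y (i + 2) - y (i + 1))"

text \<open>Standard-sample spacing Z_{i+1} (0-based index i) and the moments m, S, D,
  computed under the standard law (i.i.d. from F).\<close>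
definition Zs :: "nat \<Rightarrow> (nat \<Rightarrow> real) \<Rightarrow> real" where
  "Zs i \<omega> = pmax (i + 2) \<omega> - pmax (i + 1) \<omega>"

definition mvec :: "nat \<Rightarrow> real measure \<Rightarrow> real vec" where
  "mvec n M = vec (n - 1) (\<lambda>i. integral\<^sup>L (PiM {1..n} (\<lambda>_. M)) (Zs i))"

definition Smat :: "nat \<Rightarrow> real measure \<Rightarrow> real mat" where
  "Smat n M = mat (n - 1) (n - 1) (\<lambda>(i, j).
     integral\<^sup>L (PiM {1..n} (\<lambda>_. M)) (\<lambda>\<omega>. Zs i \<omega> * Zs j \<omega>)
     - integral\<^sup>L (PiM {1..n} (\<lambda>_. M)) (Zs i) * integral\<^sup>L (PiM {1..n} (\<lambda>_. M)) (Zs j))"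

definition Dmat :: "nat \<Rightarrow> real measure \<Rightarrow> real mat" where
  "Dmat n M = mat (n - 1) (n - 1) (\<lambda>(i, j).
     integral\<^sup>L (PiM {1..n} (\<lambda>_. M)) (\<lambda>\<omega>. Zs i \<omega> * Zs j \<omega>))"

definition pos_def_mat :: "real mat \<Rightarrow> bool" where
  "pos_def_mat A \<longleftrightarrow> A \<in> carrier_mat (dim_row A) (dim_row A) \<and>
     (\<forall>v \<in> carrier_vec (dim_row A). v \<noteq> 0\<^sub>v (dim_row A) \<longrightarrow> v \<bullet> (A *\<^sub>v v) > 0)"

definition minv :: "real mat \<Rightarrow> real mat" where
  "minv A = the (mat_inverse A)"

end

theory Submission imports Defs "Jordan_Normal_Form.Determinant" begin

text \<open>Since the partial maxima of \<open>a + b X\<close> are \<open>a + b\<close> times those of \<open>X\<close>, a linear statistic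
  \<open>\<Sum> c\<^sub>j X\<^sup>*\<^sub>j\<^sub>:\<^sub>j\<close> is invariant, and has mean free of \<open>a\<close>, exactly when \<open>\<Sum> c\<^sub>j = 0\<close>; by summation
  by parts these are precisely the statistics \<open>w' Z\<^sup>*\<close> in the spacings, and every weight vector \<open>w\<close>
  arises. Such a statistic has mean \<open>b w' m\<close> and second moment \<open>b\<^sup>2 w' D w\<close>, so an unbiased one
  (\<open>w' m = 1\<close>) has variance \<open>b\<^sup>2 w' S w\<close> and an invariant one has mean squared error
  \<open>b\<^sup>2 (w' D w - 2 w' m + 1)\<close>. Completing the square in the positive definite forms \<open>S\<close> and \<open>D\<close>
  shows that the unique minimisers are \<open>S\<^sup>-\<^sup>1 m / m' S\<^sup>-\<^sup>1 m\<close> and \<open>D\<^sup>-\<^sup>1 m\<close>.\<close>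

lemma scalar_prod_mult_mat_vec_double_sum:
  assumes "A \<in> carrier_mat k k" "x \<in> carrier_vec k" "y \<in> carrier_vec k"
  shows "x \<bullet> (A *\<^sub>v y) = (\<Sum>i<k. \<Sum>j<k. x $ i * A $$ (i, j) * y $ j)"
  using assms
  by (simp add: scalar_prod_def mult_mat_vec_def row_def sum_distrib_left mult.assoc atLeast0LessThan)

lemma minus_vec_eq_0_iff:
  fixes u w :: "'a :: ab_group_add vec"
  assumes "u \<in> carrier_vec k" "w \<in> carrier_vec k"
  shows "u - w = 0\<^sub>v k \<longleftrightarrow> u = w"
proof
  assume diff: "u - w = 0\<^sub>v k"
  show "u = w"
  proof (rule eq_vecI)
    fix i assume "i < dim_vec w"
    then have "(u - w) $ i = 0" using diff assms by simp
    then show "u $ i = w $ i" using \<open>i < dim_vec w\<close> by simp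
  qed (use assms in simp)
qed (use assms in simp)

lemma unit_vec_quad_form:
  fixes A :: "'a :: semiring_1 mat"
  assumes "A \<in> carrier_mat k k" "i < k"
  shows "unit_vec k i \<bullet> (A *\<^sub>v unit_vec k i) = A $$ (i, i)"
proof -
  have "A *\<^sub>v unit_vec k i \<in> carrier_vec k" using assms(1) by simp
  then have "unit_vec k i \<bullet> (A *\<^sub>v unit_vec k i) = (A *\<^sub>v unit_vec k i) $ i"
    using assms(2) by (rule scalar_prod_left_unit)
  also have "\<dots> = A $$ (i, i)" using assms by simp
  finally show ?thesis .
qed

lemma pos_def_matD:
  assumes "pos_def_mat A" "A \<in> carrier_mat k k" "v \<in> carrier_vec k" "v \<noteq> 0\<^sub>v k"
  shows "v \<bullet> (A *\<^sub>v v) > 0"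
  using assms unfolding pos_def_mat_def by auto

lemma pos_def_mat_quad_nonneg:
  assumes "pos_def_mat A" "A \<in> carrier_mat k k" "v \<in> carrier_vec k"
  shows "v \<bullet> (A *\<^sub>v v) \<ge> 0"
  using pos_def_matD[OF assms] assms by (cases "v = 0\<^sub>v k") auto

lemma pos_def_mat_quad_le_0_imp_zero:
  assumes "pos_def_mat A" "A \<in> carrier_mat k k" "v \<in> carrier_vec k" "v \<bullet> (A *\<^sub>v v) \<le> 0"
  shows "v = 0\<^sub>v k"
  using pos_def_matD[OF assms(1-3)] assms(4) by fastforce

lemma pos_def_mat_minv:
  assumes pd: "pos_def_mat A" and A: "A \<in> carrier_mat k k"
  shows "A * minv A = 1\<^sub>m k" "minv A * A = 1\<^sub>m k" "minv A \<in> carrier_mat k k"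
proof -
  have "det A \<noteq> 0"
  proof
    assume "det A = 0"
    then obtain v where "v \<in> carrier_vec k" "v \<noteq> 0\<^sub>v k" "A *\<^sub>v v = 0\<^sub>v k"
      using det_0_iff_vec_prod_zero[OF A] by blast
    with pos_def_matD[OF pd A] show False by fastforce
  qed
  then have "A \<in> Units (ring_mat TYPE(real) k ())"
    by (rule det_non_zero_imp_unit[OF A])
  then obtain B where "mat_inverse A = Some B"
    using mat_inverse(1)[OF A] by fastforce
  with mat_inverse(2)[OF A this] show "A * minv A = 1\<^sub>m k" "minv A * A = 1\<^sub>m k" "minv A \<in> carrier_mat k k"
    by (simp_all add: minv_def)
qed

lemma pos_def_mat_mult_minv_vec:
  assumes "pos_def_mat A" "A \<in> carrier_mat k k" "x \<in> carrier_vec k"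
  shows "A *\<^sub>v (minv A *\<^sub>v x) = x"
  using pos_def_mat_minv[OF assms(1,2)] assms(2,3)
  by (metis assoc_mult_mat_vec one_mult_mat_vec)

lemma symmetric_mat_scalar_prod_swap:
  fixes A :: "real mat"
  assumes A: "A \<in> carrier_mat k k" "transpose_mat A = A"
    and x: "x \<in> carrier_vec k" and y: "y \<in> carrier_vec k"
  shows "x \<bullet> (A *\<^sub>v y) = y \<bullet> (A *\<^sub>v x)"
proof -
  have "x \<bullet> (A *\<^sub>v y) = (transpose_mat A *\<^sub>v x) \<bullet> y"
    by (rule transpose_vec_mult_scalar[OF A(1) y x, symmetric])
  also have "\<dots> = y \<bullet> (A *\<^sub>v x)"
    using A x by (simp add: comm_scalar_prod[OF _ y])
  finally show ?thesis .
qed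

lemma symmetric_mat_minv_scalar_prod_swap:
  assumes pd: "pos_def_mat A" and A: "A \<in> carrier_mat k k" "transpose_mat A = A"
    and x: "x \<in> carrier_vec k" and y: "y \<in> carrier_vec k"
  shows "x \<bullet> (minv A *\<^sub>v y) = (minv A *\<^sub>v x) \<bullet> y"
proof -
  have inv: "minv A *\<^sub>v x \<in> carrier_vec k" "minv A *\<^sub>v y \<in> carrier_vec k"
    using pos_def_mat_minv(3)[OF pd A(1)] x y by auto
  have "x \<bullet> (minv A *\<^sub>v y) = (minv A *\<^sub>v y) \<bullet> (A *\<^sub>v (minv A *\<^sub>v x))"
    using pos_def_mat_mult_minv_vec[OF pd A(1) x] comm_scalar_prod[OF x inv(2)] by simp
  also have "\<dots> = (minv A *\<^sub>v x) \<bullet> y"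
    using symmetric_mat_scalar_prod_swap[OF A inv(2,1)] pos_def_mat_mult_minv_vec[OF pd A(1) y]
    by simp
  finally show ?thesis .
qed

lemma symmetric_mat_quad_expand:
  fixes A :: "real mat"
  assumes A: "A \<in> carrier_mat k k" "transpose_mat A = A"
    and u: "u \<in> carrier_vec k" and w: "w \<in> carrier_vec k"
  shows "u \<bullet> (A *\<^sub>v u) = w \<bullet> (A *\<^sub>v w) + 2 * ((u - w) \<bullet> (A *\<^sub>v w)) + (u - w) \<bullet> (A *\<^sub>v (u - w))"
proof -
  have Au: "A *\<^sub>v u \<in> carrier_vec k" and Aw: "A *\<^sub>v w \<in> carrier_vec k" using A u w by auto
  have "(u - w) \<bullet> (A *\<^sub>v (u - w)) = (u - w) \<bullet> (A *\<^sub>v u) - (u - w) \<bullet> (A *\<^sub>v w)"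
    using A u w Au Aw by (simp add: mult_minus_distrib_mat_vec scalar_prod_minus_distrib[of _ k])
  also have "\<dots> = u \<bullet> (A *\<^sub>v u) - w \<bullet> (A *\<^sub>v u) - (u \<bullet> (A *\<^sub>v w) - w \<bullet> (A *\<^sub>v w))"
    using u w Au Aw by (simp add: minus_scalar_prod_distrib[of _ k])
  finally have "(u - w) \<bullet> (A *\<^sub>v (u - w)) = u \<bullet> (A *\<^sub>v u) - w \<bullet> (A *\<^sub>v u) - (u \<bullet> (A *\<^sub>v w) - w \<bullet> (A *\<^sub>v w))" .
  moreover have "(u - w) \<bullet> (A *\<^sub>v w) = u \<bullet> (A *\<^sub>v w) - w \<bullet> (A *\<^sub>v w)"
    using u w Aw by (rule minus_scalar_prod_distrib)
  moreover have "w \<bullet> (A *\<^sub>v u) = u \<bullet> (A *\<^sub>v w)"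
    by (rule symmetric_mat_scalar_prod_swap[OF A w u])
  ultimately show ?thesis by simp
qed

lemma pos_def_mat_minv_quad_pos:
  fixes m :: "real vec"
  assumes pd: "pos_def_mat A" and A: "A \<in> carrier_mat k k"
    and m: "m \<in> carrier_vec k" "m \<noteq> 0\<^sub>v k"
  shows "m \<bullet> (minv A *\<^sub>v m) > 0"
proof -
  define w where "w = minv A *\<^sub>v m"
  have w: "w \<in> carrier_vec k" using pos_def_mat_minv(3)[OF pd A] m by (simp add: w_def)
  have Aw: "A *\<^sub>v w = m" unfolding w_def by (rule pos_def_mat_mult_minv_vec[OF pd A m(1)])
  have "w \<noteq> 0\<^sub>v k"
    using Aw A m(2) by auto
  then have "w \<bullet> (A *\<^sub>v w) > 0" by (rule pos_def_matD[OF pd A w])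
  then show ?thesis using comm_scalar_prod[OF m(1) w] by (simp add: Aw flip: w_def)
qed

text \<open>Gauss--Markov by completing the square: the minimiser of \<open>u \<bullet> A u\<close> on the hyperplane
  \<open>u \<bullet> m = 1\<close> is the multiple of \<open>A\<^sup>-\<^sup>1 m\<close> on it.\<close>
lemma pos_def_mat_constrained_quad:
  fixes A :: "real mat" and m u :: "real vec"
  assumes pd: "pos_def_mat A" and A: "A \<in> carrier_mat k k" "transpose_mat A = A"
    and m: "m \<in> carrier_vec k" and q: "q = m \<bullet> (minv A *\<^sub>v m)" "q \<noteq> 0"
    and u: "u \<in> carrier_vec k" "u \<bullet> m = 1"
  shows "u \<bullet> (A *\<^sub>v u) = 1 / q + (u - (1 / q) \<cdot>\<^sub>v (minv A *\<^sub>v m)) \<bullet> (A *\<^sub>v (u - (1 / q) \<cdot>\<^sub>v (minv A *\<^sub>v m)))"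
proof -
  define x where "x = (1 / q) \<cdot>\<^sub>v (minv A *\<^sub>v m)"
  have w: "minv A *\<^sub>v m \<in> carrier_vec k" using pos_def_mat_minv(3)[OF pd A(1)] m by simp
  then have x: "x \<in> carrier_vec k" by (simp add: x_def)
  have Ax: "A *\<^sub>v x = (1 / q) \<cdot>\<^sub>v m"
    using A(1) w pos_def_mat_mult_minv_vec[OF pd A(1) m] by (simp add: x_def mult_mat_vec)
  have xm: "x \<bullet> m = 1"
    using q comm_scalar_prod[OF m w] w m by (simp add: x_def)
  have "(u - x) \<bullet> (A *\<^sub>v x) = (1 / q) * ((u - x) \<bullet> m)"
    using u x m by (simp add: Ax)
  also have "\<dots> = 0" using u x m xm by (simp add: minus_scalar_prod_distrib[of _ k])
  finally have "(u - x) \<bullet> (A *\<^sub>v x) = 0" .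
  moreover have "x \<bullet> (A *\<^sub>v x) = 1 / q" using x m xm by (simp add: Ax)
  ultimately show ?thesis
    using symmetric_mat_quad_expand[OF A u(1) x] by (simp add: x_def)
qed

lemma pos_def_mat_shifted_quad:
  fixes A :: "real mat" and m u :: "real vec"
  assumes pd: "pos_def_mat A" and A: "A \<in> carrier_mat k k" "transpose_mat A = A"
    and m: "m \<in> carrier_vec k" and u: "u \<in> carrier_vec k"
  shows "u \<bullet> (A *\<^sub>v u) - 2 * (u \<bullet> m)
    = - (m \<bullet> (minv A *\<^sub>v m)) + (u - minv A *\<^sub>v m) \<bullet> (A *\<^sub>v (u - minv A *\<^sub>v m))"
proof -
  define w where "w = minv A *\<^sub>v m"
  have w: "w \<in> carrier_vec k" using pos_def_mat_minv(3)[OF pd A(1)] m by (simp add: w_def)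
  have Aw: "A *\<^sub>v w = m" unfolding w_def by (rule pos_def_mat_mult_minv_vec[OF pd A(1) m])
  have "(u - w) \<bullet> m = u \<bullet> m - w \<bullet> m" using u w m by (rule minus_scalar_prod_distrib)
  moreover have "w \<bullet> m = m \<bullet> w" using w m by (rule comm_scalar_prod)
  ultimately show ?thesis
    using symmetric_mat_quad_expand[OF A u w] by (simp add: Aw flip: w_def)
qed

lemma sum_by_parts_partial_sums:
  fixes c y :: "nat \<Rightarrow> real"
  shows "(\<Sum>j\<in>{1..Suc m}. c j * y j) = (\<Sum>j\<in>{1..Suc m}. c j) * y (Suc m)
     - (\<Sum>i<m. (\<Sum>j\<in>{1..i+1}. c j) * (y (i+2) - y (i+1)))"
proof (induction m)
  case 0
  then show ?case by simp
next
  case (Suc m)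
  have "(\<Sum>j\<in>{1..Suc (Suc m)}. c j * y j) = (\<Sum>j\<in>{1..Suc m}. c j * y j) + c (Suc (Suc m)) * y (Suc (Suc m))"
    by simp
  also have "\<dots> = (\<Sum>j\<in>{1..Suc (Suc m)}. c j) * y (Suc (Suc m))
     - (\<Sum>i<Suc m. (\<Sum>j\<in>{1..i+1}. c j) * (y (i+2) - y (i+1)))"
    using Suc by (simp add: algebra_simps)
  finally show ?case .
qed

definition spacing_weights :: "nat \<Rightarrow> (nat \<Rightarrow> real) \<Rightarrow> real vec" where
  "spacing_weights n c = vec (n - 1) (\<lambda>i. - (\<Sum>j\<in>{1..i+1}. c j))"

lemma spacing_weights_carrier [simp]: "spacing_weights n c \<in> carrier_vec (n - 1)"
  by (simp add: spacing_weights_def)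

lemma linform_eq_spacing_weights:
  assumes "n \<ge> 1" and "(\<Sum>j\<in>{1..n}. c j) = 0"
  shows "linform n c y = spacing_weights n c \<bullet> spacings n y"
proof -
  obtain m where n: "n = Suc m" using assms(1) by (cases n) auto
  have "linform n c y = - (\<Sum>i<m. (\<Sum>j\<in>{1..i+1}. c j) * (y (i+2) - y (i+1)))"
    using assms(2) unfolding linform_def n sum_by_parts_partial_sums by simp
  also have "\<dots> = (\<Sum>i<m. (- (\<Sum>j\<in>{1..i+1}. c j)) * (y (i+2) - y (i+1)))"
    by (simp only: mult_minus_left sum_negf)
  also have "\<dots> = spacing_weights n c \<bullet> spacings n y"
    by (simp add: n spacing_weights_def spacings_def scalar_prod_def atLeast0LessThan)
  finally show ?thesis .
qed

text \<open>In 1-based indices, \<open>c\<^sub>j = u\<^sub>j\<^sub>-\<^sub>1 - u\<^sub>j\<close> with \<open>u\<^sub>0 = u\<^sub>n = 0\<close>: the estimator with these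
  coefficients is \<open>\<Sum>\<^sub>i u\<^sub>i (y\<^sub>i\<^sub>+\<^sub>1 - y\<^sub>i)\<close>.\<close>
definition spacing_coeffs :: "nat \<Rightarrow> real vec \<Rightarrow> nat \<Rightarrow> real" where
  "spacing_coeffs n u j =
     (if 2 \<le> j \<and> j \<le> n then u $ (j - 2) else 0) - (if 1 \<le> j \<and> j < n then u $ (j - 1) else 0)"

lemma spacing_coeffs_partial_sum:
  "i + 1 < n \<Longrightarrow> (\<Sum>j\<in>{1..i+1}. spacing_coeffs n u j) = - u $ i"
  by (induction i) (simp_all add: spacing_coeffs_def)

lemma sum_spacing_coeffs:
  assumes "n \<ge> 2"
  shows "(\<Sum>j\<in>{1..n}. spacing_coeffs n u j) = 0"
proof -
  obtain m where n: "n = Suc (Suc m)" using assms by (metis add_2_eq_Suc le_Suc_ex)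
  have "(\<Sum>j\<in>{1..n}. spacing_coeffs n u j) = (\<Sum>j\<in>{1..m+1}. spacing_coeffs n u j) + spacing_coeffs n u n"
    by (simp add: n)
  then show ?thesis using spacing_coeffs_partial_sum[of m n u] by (simp add: n spacing_coeffs_def)
qed

lemma spacing_weights_spacing_coeffs:
  assumes "u \<in> carrier_vec (n - 1)"
  shows "spacing_weights n (spacing_coeffs n u) = u"
proof (rule eq_vecI)
  fix i assume "i < dim_vec u"
  then have i: "i < n - 1" "i + 1 < n" using assms by auto
  show "spacing_weights n (spacing_coeffs n u) $ i = u $ i"
    unfolding spacing_weights_def index_vec[OF i(1)] spacing_coeffs_partial_sum[OF i(2)] by simp
qed (use assms in \<open>simp add: spacing_weights_def\<close>)

lemma linform_spacing_coeffs:
  assumes "n \<ge> 2" and "u \<in> carrier_vec (n - 1)"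
  shows "linform n (spacing_coeffs n u) y = u \<bullet> spacings n y"
  using linform_eq_spacing_weights[OF _ sum_spacing_coeffs[OF assms(1)]] assms
  by (simp add: spacing_weights_spacing_coeffs)

lemma invariant2_iff: "invariant2 n c \<longleftrightarrow> (\<Sum>j\<in>{1..n}. c j) = 0"
proof
  assume "invariant2 n c"
  from this[unfolded invariant2_def, rule_format, of 1 "\<lambda>_. 0" 1]
  show "(\<Sum>j\<in>{1..n}. c j) = 0" by (simp add: linform_def)
next
  have "linform n c (\<lambda>j. b * y j + a) = b * linform n c y + a * (\<Sum>j\<in>{1..n}. c j)" for y a b
    unfolding linform_def by (simp add: algebra_simps sum.distrib sum_distrib_left)
  then show "(\<Sum>j\<in>{1..n}. c j) = 0 \<Longrightarrow> invariant2 n c"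
    unfolding invariant2_def by simp
qed

lemma pmax_eq_component:
  assumes "1 \<le> j"
  obtains k where "k \<in> {1..j}" "pmax j \<omega> = \<omega> k"
proof -
  have "pmax j \<omega> \<in> \<omega> ` {1..j}"
    unfolding pmax_def using assms by (intro Max_in) auto
  with that show ?thesis by blast
qed

lemma pmax_mono: "1 \<le> i \<Longrightarrow> i \<le> j \<Longrightarrow> pmax i \<omega> \<le> pmax j \<omega>"
  unfolding pmax_def by (rule Max_mono) auto

lemma Zs_nonneg: "Zs i \<omega> \<ge> 0"
  unfolding Zs_def using pmax_mono[of "i + 1" "i + 2" \<omega>] by simp

lemma pmax_affine:
  assumes "1 \<le> j" "j \<le> n" "b \<ge> 0"
  shows "pmax j (compose {1..n} (\<lambda>x. a + b * x) \<omega>) = a + b * pmax j \<omega>"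
proof -
  have "compose {1..n} (\<lambda>x. a + b * x) \<omega> ` {1..j} = (\<lambda>x. a + b * x) ` (\<omega> ` {1..j})"
    using assms by (force simp: compose_def)
  moreover have "mono (\<lambda>x. a + b * x)"
    using assms(3) by (intro monoI) (simp add: mult_left_mono)
  ultimately show ?thesis
    unfolding pmax_def using assms mono_Max_commute[of "\<lambda>x. a + b * x" "\<omega> ` {1..j}"] by simp
qed

lemma borel_measurable_pmax:
  assumes "j \<le> n" and K: "sets K = sets borel"
  shows "pmax j \<in> borel_measurable (PiM {1..n} (\<lambda>_. K))"
  unfolding pmax_def[abs_def]
proof (rule borel_measurable_Max)
  fix i assume "i \<in> {1..j}"
  with assms(1) have "(\<lambda>\<omega>. \<omega> i) \<in> measurable (PiM {1..n} (\<lambda>_. K)) K"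
    by (intro measurable_component_singleton) auto
  then show "(\<lambda>\<omega>. \<omega> i) \<in> borel_measurable (PiM {1..n} (\<lambda>_. K))"
    unfolding measurable_cong_sets[OF refl K[symmetric]] .
qed simp

lemma spacings_affine: "spacings n (\<lambda>j. a + b * y j) = b \<cdot>\<^sub>v spacings n y"
  by (intro eq_vecI) (simp_all add: spacings_def algebra_simps)

lemma spacings_cong: "(\<And>j. 1 \<le> j \<Longrightarrow> j \<le> n \<Longrightarrow> y j = z j) \<Longrightarrow> spacings n y = spacings n z"
  by (intro eq_vecI) (auto simp: spacings_def)

definition spacing_stat :: "nat \<Rightarrow> real vec \<Rightarrow> (nat \<Rightarrow> real) \<Rightarrow> real" where
  "spacing_stat n u \<omega> = u \<bullet> spacings n (\<lambda>j. pmax j \<omega>)"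

lemma spacing_stat_eq_sum: "spacing_stat n u \<omega> = (\<Sum>i<n-1. u $ i * Zs i \<omega>)"
  by (simp add: spacing_stat_def spacings_def Zs_def scalar_prod_def atLeast0LessThan)

lemma spacing_stat_affine:
  assumes "b \<ge> 0" "u \<in> carrier_vec (n - 1)"
  shows "spacing_stat n u (compose {1..n} (\<lambda>x. a + b * x) \<omega>) = b * spacing_stat n u \<omega>"
proof -
  have "spacings n (\<lambda>j. pmax j (compose {1..n} (\<lambda>x. a + b * x) \<omega>)) = spacings n (\<lambda>j. a + b * pmax j \<omega>)"
    by (rule spacings_cong, rule pmax_affine) (use assms in auto)
  then show ?thesis
    using assms(2) by (simp add: spacing_stat_def spacings_affine spacings_def)
qed

lemma borel_measurable_spacing_stat:
  "sets K = sets borel \<Longrightarrow> spacing_stat n u \<in> borel_measurable (PiM {1..n} (\<lambda>_. K))"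
  unfolding spacing_stat_eq_sum[abs_def] Zs_def
  by (intro borel_measurable_sum borel_measurable_times borel_measurable_diff borel_measurable_pmax) auto

lemma linest_affine:
  assumes "b \<ge> 0"
  shows "linest n c (compose {1..n} (\<lambda>x. a + b * x) \<omega>) = a * (\<Sum>j\<in>{1..n}. c j) + b * linest n c \<omega>"
proof -
  have "linest n c (compose {1..n} (\<lambda>x. a + b * x) \<omega>) = (\<Sum>j\<in>{1..n}. a * c j + b * (c j * pmax j \<omega>))"
    unfolding linest_def linform_def
  proof (intro sum.cong refl)
    fix j assume "j \<in> {1..n}"
    then show "c j * pmax j (compose {1..n} (\<lambda>x. a + b * x) \<omega>) = a * c j + b * (c j * pmax j \<omega>)"
      using pmax_affine[of j n b a \<omega>] assms by (simp add: algebra_simps)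
  qed
  then show ?thesis by (simp add: sum.distrib sum_distrib_left linest_def linform_def)
qed

lemma borel_measurable_linest:
  "sets K = sets borel \<Longrightarrow> linest n c \<in> borel_measurable (PiM {1..n} (\<lambda>_. K))"
  unfolding linest_def[abs_def] linform_def
  by (intro borel_measurable_sum borel_measurable_times borel_measurable_pmax) auto

lemma linest_eq_spacing_stat:
  "n \<ge> 1 \<Longrightarrow> (\<Sum>j\<in>{1..n}. c j) = 0 \<Longrightarrow> linest n c = spacing_stat n (spacing_weights n c)"
  by (simp add: fun_eq_iff linest_def spacing_stat_def linform_eq_spacing_weights)

lemma linest_spacing_coeffs:
  "n \<ge> 2 \<Longrightarrow> u \<in> carrier_vec (n - 1) \<Longrightarrow> linest n (spacing_coeffs n u) = spacing_stat n u"
  by (simp add: fun_eq_iff linest_def spacing_stat_def linform_spacing_coeffs)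

lemma abs_mult_le_max_square: "\<bar>x * y\<bar> \<le> max (x\<^sup>2) (y\<^sup>2)" for x y :: real
proof (cases "\<bar>x\<bar> \<le> \<bar>y\<bar>")
  case True
  then have "\<bar>x\<bar> * \<bar>y\<bar> \<le> \<bar>y\<bar> * \<bar>y\<bar>" by (intro mult_right_mono) auto
  then show ?thesis by (simp add: abs_mult power2_eq_square)
next
  case False
  then have "\<bar>x\<bar> * \<bar>y\<bar> \<le> \<bar>x\<bar> * \<bar>x\<bar>" by (intro mult_left_mono) auto
  then show ?thesis by (simp add: abs_mult power2_eq_square)
qed

text \<open>From here on \<open>1 :: nat\<close> is no longer rewritten to \<open>Suc 0\<close>, so that the index set
  \<open>{1..n}\<close> of the product measure keeps its shape and facts about it apply by rewriting.\<close>
declare One_nat_def [simp del]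

locale standard_sample =
  fixes n :: nat and M :: "real measure"
  assumes n_ge_2: "n \<ge> 2"
    and real_distribution: "real_distribution M"
    and square_integrable: "integrable M (\<lambda>x. x\<^sup>2)"
begin

abbreviation P :: "(nat \<Rightarrow> real) measure" where
  "P \<equiv> PiM {1..n} (\<lambda>_. M)"

lemma prob_space_M: "prob_space M"
  using real_distribution by (simp add: real_distribution_def)

lemma sets_M: "sets M = sets borel"
  using real_distribution by (simp add: real_distribution_def real_distribution_axioms_def)

sublocale P: prob_space P
  using prob_space_M by (intro prob_space_PiM) auto

lemma Ex_affine:
  assumes g: "g \<in> borel_measurable (PiM {1..n} (\<lambda>_. borel))"
  shows "Ex n M a b g = integral\<^sup>L P (\<lambda>\<omega>. g (compose {1..n} (\<lambda>x. a + b * x) \<omega>))"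
proof -
  define h where "h = (\<lambda>x::real. a + b * x)"
  define N where "N = distr M borel h"
  have sets_N: "sets N = sets borel" by (simp add: N_def)
  have h_borel: "h \<in> measurable M borel"
    unfolding measurable_cong_sets[OF sets_M refl] by (simp add: h_def)
  then have h: "h \<in> measurable M N"
    unfolding measurable_cong_sets[OF refl sets_N] .
  have "prob_space N"
    unfolding N_def using prob_space_M h_borel by (intro prob_space.prob_space_distr) auto
  then have "distr P (PiM {1..n} (\<lambda>_. N)) (compose {1..n} h) = PiM {1..n} (\<lambda>_. distr M N h)"
    by (intro distr_PiM_finite_prob_space') (use prob_space_M h in auto)
  also have "distr M N h = N"
    unfolding N_def by (rule distr_cong) (simp_all add: sets_N[unfolded N_def])
  finally have law: "sample_law n M a b = distr P (PiM {1..n} (\<lambda>_. N)) (compose {1..n} h)"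
    by (simp add: sample_law_def N_def h_def)
  have compose_h: "compose {1..n} h \<in> measurable P (PiM {1..n} (\<lambda>_. N))"
    unfolding compose_def
  proof (rule measurable_restrict)
    fix i :: nat assume "i \<in> {1..n}"
    then have "(\<lambda>\<omega>. \<omega> i) \<in> measurable P M" by (rule measurable_component_singleton)
    then show "(\<lambda>\<omega>. h (\<omega> i)) \<in> measurable P N" using h by (rule measurable_compose)
  qed
  have sets_PiM_N: "sets (PiM {1..n} (\<lambda>_. N)) = sets (PiM {1..n} (\<lambda>_. borel::real measure))"
    by (intro sets_PiM_cong) (simp_all add: sets_N)
  have "g \<in> borel_measurable (PiM {1..n} (\<lambda>_. N))"
    unfolding measurable_cong_sets[OF sets_PiM_N refl] by (rule g)
  with compose_h have "integral\<^sup>L (distr P (PiM {1..n} (\<lambda>_. N)) (compose {1..n} h)) g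
      = integral\<^sup>L P (\<lambda>\<omega>. g (compose {1..n} h \<omega>))"
    by (rule integral_distr)
  then show ?thesis by (simp add: Ex_def law h_def)
qed

lemma integrable_component_square: "k \<in> {1..n} \<Longrightarrow> integrable P (\<lambda>\<omega>. (\<omega> k)\<^sup>2)"
proof -
  assume k: "k \<in> {1..n}"
  have component: "(\<lambda>\<omega>. \<omega> k) \<in> measurable P M"
    using k by (rule measurable_component_singleton)
  have law: "distr P M (\<lambda>\<omega>. \<omega> k) = M"
    using prob_space_M k by (intro distr_PiM_component) auto
  have "(\<lambda>x::real. x\<^sup>2) \<in> borel_measurable M"
    by (simp add: measurable_cong_sets[OF sets_M refl])
  from integrable_distr_eq[OF component this] show ?thesis
    unfolding law using square_integrable by (simp only:)
qed

lemma integrable_pmax_mult: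
  assumes i: "i \<in> {1..n}" and j: "j \<in> {1..n}"
  shows "integrable P (\<lambda>\<omega>. pmax i \<omega> * pmax j \<omega>)"
proof (rule Bochner_Integration.integrable_bound)
  show "integrable P (\<lambda>\<omega>. \<Sum>k\<in>{1..n}. (\<omega> k)\<^sup>2)"
    using integrable_component_square by auto
  show "(\<lambda>\<omega>. pmax i \<omega> * pmax j \<omega>) \<in> borel_measurable P"
    using i j by (intro borel_measurable_times borel_measurable_pmax sets_M) auto
  show "AE \<omega> in P. norm (pmax i \<omega> * pmax j \<omega>) \<le> norm (\<Sum>k\<in>{1..n}. (\<omega> k)\<^sup>2)"
  proof (intro AE_I2)
    fix \<omega> :: "nat \<Rightarrow> real"
    obtain k where k: "k \<in> {1..i}" "pmax i \<omega> = \<omega> k"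
      by (rule pmax_eq_component[of i \<omega>]) (use i in auto)
    obtain l where l: "l \<in> {1..j}" "pmax j \<omega> = \<omega> l"
      by (rule pmax_eq_component[of j \<omega>]) (use j in auto)
    have kl: "k \<in> {1..n}" "l \<in> {1..n}" using i j k(1) l(1) by auto
    have "\<bar>\<omega> k * \<omega> l\<bar> \<le> max ((\<omega> k)\<^sup>2) ((\<omega> l)\<^sup>2)"
      by (rule abs_mult_le_max_square)
    also have "\<dots> \<le> (\<Sum>k\<in>{1..n}. (\<omega> k)\<^sup>2)"
      using kl by (auto intro!: member_le_sum)
    finally show "norm (pmax i \<omega> * pmax j \<omega>) \<le> norm (\<Sum>k\<in>{1..n}. (\<omega> k)\<^sup>2)"
      using k(2) l(2) by simp
  qed
qed

lemma integrable_pmax: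
  assumes "j \<in> {1..n}"
  shows "integrable P (pmax j)"
proof (rule P.square_integrable_imp_integrable)
  show "pmax j \<in> borel_measurable P"
    using assms by (intro borel_measurable_pmax sets_M) auto
  show "integrable P (\<lambda>\<omega>. (pmax j \<omega>)\<^sup>2)"
    using integrable_pmax_mult[OF assms assms] by (simp add: power2_eq_square)
qed

lemma integrable_Zs: "i < n - 1 \<Longrightarrow> integrable P (Zs i)"
  unfolding Zs_def[abs_def] by (intro Bochner_Integration.integrable_diff integrable_pmax) auto

lemma integrable_Zs_mult:
  assumes "i < n - 1" "j < n - 1"
  shows "integrable P (\<lambda>\<omega>. Zs i \<omega> * Zs j \<omega>)"
proof -
  have "(\<lambda>\<omega>. Zs i \<omega> * Zs j \<omega>) = (\<lambda>\<omega>. pmax (i+2) \<omega> * pmax (j+2) \<omega> - pmax (i+2) \<omega> * pmax (j+1) \<omega>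
     - pmax (i+1) \<omega> * pmax (j+2) \<omega> + pmax (i+1) \<omega> * pmax (j+1) \<omega>)"
    by (simp add: fun_eq_iff Zs_def algebra_simps)
  then show ?thesis using assms
    by (simp only:) (intro Bochner_Integration.integrable_add Bochner_Integration.integrable_diff
        integrable_pmax_mult, auto)
qed

lemma mvec_carrier [simp]: "mvec n M \<in> carrier_vec (n - 1)"
  by (simp add: mvec_def)

lemma Smat_carrier [simp]: "Smat n M \<in> carrier_mat (n - 1) (n - 1)"
  by (simp add: Smat_def)

lemma Dmat_carrier [simp]: "Dmat n M \<in> carrier_mat (n - 1) (n - 1)"
  by (simp add: Dmat_def)

lemma transpose_Smat: "transpose_mat (Smat n M) = Smat n M"
  by (intro eq_matI) (auto simp: Smat_def mult.commute)

lemma transpose_Dmat: "transpose_mat (Dmat n M) = Dmat n M"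
  by (intro eq_matI) (auto simp: Dmat_def mult.commute)

lemma integral_spacing_stat: "integral\<^sup>L P (spacing_stat n u) = u \<bullet> mvec n M"
proof -
  have "integral\<^sup>L P (spacing_stat n u) = (\<Sum>i<n-1. u $ i * integral\<^sup>L P (Zs i))"
    unfolding spacing_stat_eq_sum[abs_def] using integrable_Zs
    by (subst Bochner_Integration.integral_sum) auto
  also have "\<dots> = u \<bullet> mvec n M"
    by (simp add: scalar_prod_def mvec_def atLeast0LessThan)
  finally show ?thesis .
qed

lemma integrable_spacing_stat: "integrable P (spacing_stat n u)"
  unfolding spacing_stat_eq_sum[abs_def] using integrable_Zs by auto

lemma spacing_stat_square:
  "(spacing_stat n u \<omega>)\<^sup>2 = (\<Sum>i<n-1. \<Sum>j<n-1. u $ i * u $ j * (Zs i \<omega> * Zs j \<omega>))"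
  unfolding spacing_stat_eq_sum power2_eq_square sum_product by (simp add: mult_ac)

lemma integrable_spacing_stat_square: "integrable P (\<lambda>\<omega>. (spacing_stat n u \<omega>)\<^sup>2)"
  unfolding spacing_stat_square using integrable_Zs_mult
  by (intro Bochner_Integration.integrable_sum Bochner_Integration.integrable_mult_right) auto

lemma integral_spacing_stat_square:
  assumes u: "u \<in> carrier_vec (n - 1)"
  shows "integral\<^sup>L P (\<lambda>\<omega>. (spacing_stat n u \<omega>)\<^sup>2) = u \<bullet> (Dmat n M *\<^sub>v u)"
proof -
  have "integral\<^sup>L P (\<lambda>\<omega>. (spacing_stat n u \<omega>)\<^sup>2)
      = (\<Sum>i<n-1. \<Sum>j<n-1. u $ i * u $ j * integral\<^sup>L P (\<lambda>\<omega>. Zs i \<omega> * Zs j \<omega>))"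
    unfolding spacing_stat_square using integrable_Zs_mult
    by (subst Bochner_Integration.integral_sum)
       (auto intro!: sum.cong Bochner_Integration.integrable_sum Bochner_Integration.integral_sum)
  also have "\<dots> = u \<bullet> (Dmat n M *\<^sub>v u)"
    unfolding scalar_prod_mult_mat_vec_double_sum[OF Dmat_carrier u u]
    by (simp add: Dmat_def mult_ac)
  finally show ?thesis .
qed

lemma Ex_spacing_stat:
  assumes "b \<ge> 0" "u \<in> carrier_vec (n - 1)"
  shows "Ex n M a b (spacing_stat n u) = b * (u \<bullet> mvec n M)"
  unfolding Ex_affine[OF borel_measurable_spacing_stat[OF refl]] spacing_stat_affine[OF assms]
    integral_mult_right_zero integral_spacing_stat ..

lemma Ex_spacing_stat_minus_square:
  assumes b: "b \<ge> 0" and u: "u \<in> carrier_vec (n - 1)"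
  shows "Ex n M a b (\<lambda>\<omega>. (spacing_stat n u \<omega> - t)\<^sup>2)
     = b\<^sup>2 * (u \<bullet> (Dmat n M *\<^sub>v u)) - 2 * b * t * (u \<bullet> mvec n M) + t\<^sup>2"
proof -
  have meas: "(\<lambda>\<omega>. (spacing_stat n u \<omega> - t)\<^sup>2) \<in> borel_measurable (PiM {1..n} (\<lambda>_. borel))"
    using borel_measurable_spacing_stat by measurable
  have "Ex n M a b (\<lambda>\<omega>. (spacing_stat n u \<omega> - t)\<^sup>2)
      = integral\<^sup>L P (\<lambda>\<omega>. b\<^sup>2 * (spacing_stat n u \<omega>)\<^sup>2 - 2 * b * t * spacing_stat n u \<omega> + t\<^sup>2)"
    unfolding Ex_affine[OF meas] spacing_stat_affine[OF b u] by (simp add: power2_eq_square algebra_simps)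
  also have "\<dots> = b\<^sup>2 * (u \<bullet> (Dmat n M *\<^sub>v u)) - 2 * b * t * (u \<bullet> mvec n M) + t\<^sup>2"
    using integrable_spacing_stat integrable_spacing_stat_square
    by (simp add: integral_spacing_stat integral_spacing_stat_square[OF u] P.prob_space)
  finally show ?thesis .
qed

lemma Smat_quad_form:
  assumes u: "u \<in> carrier_vec (n - 1)"
  shows "u \<bullet> (Smat n M *\<^sub>v u) = u \<bullet> (Dmat n M *\<^sub>v u) - (u \<bullet> mvec n M)\<^sup>2"
proof -
  have "u \<bullet> (Smat n M *\<^sub>v u)
      = (\<Sum>i<n-1. \<Sum>j<n-1. u $ i * Dmat n M $$ (i, j) * u $ j - (u $ i * mvec n M $ i) * (u $ j * mvec n M $ j))"
    unfolding scalar_prod_mult_mat_vec_double_sum[OF Smat_carrier u u]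
    by (intro sum.cong refl) (simp add: Smat_def Dmat_def mvec_def algebra_simps)
  also have "\<dots> = u \<bullet> (Dmat n M *\<^sub>v u) - (\<Sum>i<n-1. u $ i * mvec n M $ i) * (\<Sum>j<n-1. u $ j * mvec n M $ j)"
    unfolding scalar_prod_mult_mat_vec_double_sum[OF Dmat_carrier u u] sum_product
    by (simp add: sum_subtractf)
  also have "(\<Sum>i<n-1. u $ i * mvec n M $ i) = u \<bullet> mvec n M"
    by (simp add: scalar_prod_def atLeast0LessThan mvec_def)
  finally show ?thesis by (simp add: power2_eq_square)
qed

lemma Var_spacing_stat:
  assumes "b \<ge> 0" "u \<in> carrier_vec (n - 1)"
  shows "Var n M a b (spacing_stat n u) = b\<^sup>2 * (u \<bullet> (Smat n M *\<^sub>v u))"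
  unfolding Var_def Ex_spacing_stat[OF assms] Ex_spacing_stat_minus_square[OF assms]
    Smat_quad_form[OF assms(2)]
  by (simp add: power2_eq_square algebra_simps)

lemma MSE2_spacing_stat:
  assumes "b \<ge> 0" "u \<in> carrier_vec (n - 1)"
  shows "MSE2 n M a b (spacing_stat n u) = b\<^sup>2 * (u \<bullet> (Dmat n M *\<^sub>v u) - 2 * (u \<bullet> mvec n M) + 1)"
  unfolding MSE2_def Ex_spacing_stat_minus_square[OF assms]
  by (simp add: power2_eq_square algebra_simps)

lemma integrable_linest: "integrable P (linest n c)"
  unfolding linest_def[abs_def] linform_def using integrable_pmax
  by (intro Bochner_Integration.integrable_sum Bochner_Integration.integrable_mult_right) auto

lemma Ex_linest:
  assumes "b \<ge> 0"
  shows "Ex n M a b (linest n c) = a * (\<Sum>j\<in>{1..n}. c j) + b * integral\<^sup>L P (linest n c)"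
  unfolding Ex_affine[OF borel_measurable_linest[OF refl]] linest_affine[OF assms]
  using integrable_linest by (simp add: P.prob_space)

lemma unbiased2_iff:
  "unbiased2 n M c \<longleftrightarrow> (\<Sum>j\<in>{1..n}. c j) = 0 \<and> spacing_weights n c \<bullet> mvec n M = 1"
proof -
  have weights: "integral\<^sup>L P (linest n c) = spacing_weights n c \<bullet> mvec n M"
    if "(\<Sum>j\<in>{1..n}. c j) = 0"
    using n_ge_2 that by (simp add: linest_eq_spacing_stat integral_spacing_stat)
  show ?thesis
  proof
    assume "unbiased2 n M c"
    then have "Ex n M 0 1 (linest n c) = 1" "Ex n M 1 1 (linest n c) = 1"
      unfolding unbiased2_def by auto
    then show "(\<Sum>j\<in>{1..n}. c j) = 0 \<and> spacing_weights n c \<bullet> mvec n M = 1"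
      using weights by (simp add: Ex_linest)
  next
    assume "(\<Sum>j\<in>{1..n}. c j) = 0 \<and> spacing_weights n c \<bullet> mvec n M = 1"
    then show "unbiased2 n M c"
      using weights by (simp add: unbiased2_def Ex_linest)
  qed
qed

text \<open>Spacings are nonnegative, so a vanishing mean spacing forces a vanishing second moment.\<close>
lemma mvec_nonzero:
  assumes D_pd: "pos_def_mat (Dmat n M)"
  shows "mvec n M \<noteq> 0\<^sub>v (n - 1)"
proof
  assume "mvec n M = 0\<^sub>v (n - 1)"
  have k: "0 < n - 1" using n_ge_2 by simp
  then have "integral\<^sup>L P (Zs 0) = 0"
    using arg_cong[OF \<open>mvec n M = 0\<^sub>v (n - 1)\<close>, of "\<lambda>v::real vec. v $ 0"] by (simp add: mvec_def)
  then have "AE \<omega> in P. Zs 0 \<omega> = 0"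
    using integral_nonneg_eq_0_iff_AE[OF integrable_Zs[OF k]] Zs_nonneg by simp
  then have "AE \<omega> in P. Zs 0 \<omega> * Zs 0 \<omega> = 0"
    by eventually_elim simp
  then have "integral\<^sup>L P (\<lambda>\<omega>. Zs 0 \<omega> * Zs 0 \<omega>) = integral\<^sup>L P (\<lambda>_. 0)"
    using integrable_Zs_mult[OF k k] by (intro integral_cong_AE) auto
  then have "Dmat n M $$ (0, 0) = 0"
    using k by (simp add: Dmat_def)
  then have "unit_vec (n - 1) 0 \<bullet> (Dmat n M *\<^sub>v unit_vec (n - 1) 0) = 0"
    using unit_vec_quad_form[OF Dmat_carrier k] by simp
  with pos_def_matD[OF D_pd Dmat_carrier, of "unit_vec (n - 1) 0"] k show False
    by simp
qed

end

locale pos_def_spacing_moments = standard_sample +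
  assumes S_pd: "pos_def_mat (Smat n M)" and D_pd: "pos_def_mat (Dmat n M)"
begin

definition blue_precision :: real where
  "blue_precision = mvec n M \<bullet> (minv (Smat n M) *\<^sub>v mvec n M)"

definition blue_weights :: "real vec" where
  "blue_weights = (1 / blue_precision) \<cdot>\<^sub>v (minv (Smat n M) *\<^sub>v mvec n M)"

definition blie_weights :: "real vec" where
  "blie_weights = minv (Dmat n M) *\<^sub>v mvec n M"

lemma blue_precision_pos: "blue_precision > 0"
  unfolding blue_precision_def using mvec_nonzero[OF D_pd]
  by (intro pos_def_mat_minv_quad_pos[OF S_pd Smat_carrier]) simp_all

lemma blue_weights_carrier [simp]: "blue_weights \<in> carrier_vec (n - 1)"
  using pos_def_mat_minv(3)[OF S_pd Smat_carrier] by (simp add: blue_weights_def)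

lemma blie_weights_carrier [simp]: "blie_weights \<in> carrier_vec (n - 1)"
  using pos_def_mat_minv(3)[OF D_pd Dmat_carrier] by (simp add: blie_weights_def)

lemma blue_weights_scalar_prod:
  assumes "v \<in> carrier_vec (n - 1)"
  shows "blue_weights \<bullet> v = mvec n M \<bullet> (minv (Smat n M) *\<^sub>v v) / blue_precision"
  using symmetric_mat_minv_scalar_prod_swap[OF S_pd Smat_carrier transpose_Smat mvec_carrier assms]
    pos_def_mat_minv(3)[OF S_pd Smat_carrier] assms
  by (simp add: blue_weights_def)

lemma blie_weights_scalar_prod:
  assumes "v \<in> carrier_vec (n - 1)"
  shows "blie_weights \<bullet> v = mvec n M \<bullet> (minv (Dmat n M) *\<^sub>v v)"
  using symmetric_mat_minv_scalar_prod_swap[OF D_pd Dmat_carrier transpose_Dmat mvec_carrier assms]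
  by (simp add: blie_weights_def)

lemma blue_weights_mvec: "blue_weights \<bullet> mvec n M = 1"
proof -
  have w: "minv (Smat n M) *\<^sub>v mvec n M \<in> carrier_vec (n - 1)"
    using pos_def_mat_minv(3)[OF S_pd Smat_carrier] by simp
  show ?thesis
    using comm_scalar_prod[OF w mvec_carrier] blue_precision_pos w
    by (simp add: blue_weights_def blue_precision_def)
qed

lemma blue_weights_quad: "blue_weights \<bullet> (Smat n M *\<^sub>v blue_weights) = 1 / blue_precision"
  using pos_def_mat_constrained_quad[OF S_pd Smat_carrier transpose_Smat mvec_carrier
      blue_precision_def _ blue_weights_carrier blue_weights_mvec] blue_precision_pos
    scalar_prod_left_zero[OF mult_mat_vec_carrier[OF Smat_carrier zero_carrier_vec]]
  by (simp add: minus_cancel_vec[OF blue_weights_carrier] flip: blue_weights_def)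

lemma Var_blue: "b > 0 \<Longrightarrow> Var n M a b (spacing_stat n blue_weights) = b\<^sup>2 / blue_precision"
  by (simp add: Var_spacing_stat blue_weights_quad)

lemma linest_unbiased: "unbiased2 n M c \<Longrightarrow> linest n c = spacing_stat n (spacing_weights n c)"
  using n_ge_2 by (simp add: unbiased2_iff linest_eq_spacing_stat)

lemma Var_unbiased:
  assumes c: "unbiased2 n M c" and b: "b > 0"
  shows "Var n M a b (linest n c) = b\<^sup>2 * (1 / blue_precision
    + (spacing_weights n c - blue_weights) \<bullet> (Smat n M *\<^sub>v (spacing_weights n c - blue_weights)))"
proof -
  have unit: "spacing_weights n c \<bullet> mvec n M = 1"
    using c unbiased2_iff by auto
  have "Var n M a b (linest n c) = b\<^sup>2 * (spacing_weights n c \<bullet> (Smat n M *\<^sub>v spacing_weights n c))"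
    using c b by (simp add: linest_unbiased Var_spacing_stat)
  also have "\<dots> = b\<^sup>2 * (1 / blue_precision
    + (spacing_weights n c - blue_weights) \<bullet> (Smat n M *\<^sub>v (spacing_weights n c - blue_weights)))"
    using pos_def_mat_constrained_quad[OF S_pd Smat_carrier transpose_Smat mvec_carrier
        blue_precision_def _ spacing_weights_carrier unit] blue_precision_pos
    by (simp add: blue_weights_def)
  finally show ?thesis .
qed

lemma unbiased2_blue: "unbiased2 n M (spacing_coeffs n blue_weights)"
  using sum_spacing_coeffs[OF n_ge_2]
  by (simp add: unbiased2_iff spacing_weights_spacing_coeffs blue_weights_mvec)

lemma is_BLUE2_iff: "is_BLUE2 n M c \<longleftrightarrow> unbiased2 n M c \<and> spacing_weights n c = blue_weights"
proof
  assume BLUE: "is_BLUE2 n M c"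
  then have c: "unbiased2 n M c" unfolding is_BLUE2_def by blast
  let ?\<delta> = "spacing_weights n c - blue_weights"
  have "Var n M 0 1 (linest n c) \<le> Var n M 0 1 (linest n (spacing_coeffs n blue_weights))"
    using BLUE unbiased2_blue unfolding is_BLUE2_def by auto
  then have "?\<delta> \<bullet> (Smat n M *\<^sub>v ?\<delta>) \<le> 0"
    using Var_unbiased[OF c, of 1 0] Var_blue[of 1 0] n_ge_2 by (simp add: linest_spacing_coeffs)
  then have "?\<delta> = 0\<^sub>v (n - 1)"
    by (intro pos_def_mat_quad_le_0_imp_zero[OF S_pd Smat_carrier]) simp
  then show "unbiased2 n M c \<and> spacing_weights n c = blue_weights"
    using c by (simp add: minus_vec_eq_0_iff)
next
  assume c: "unbiased2 n M c \<and> spacing_weights n c = blue_weights"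
  show "is_BLUE2 n M c"
    unfolding is_BLUE2_def
  proof (intro conjI allI impI)
    fix d a and b :: real assume d: "unbiased2 n M d" and b: "b > 0"
    have "Var n M a b (linest n c) = b\<^sup>2 / blue_precision"
      using c b Var_blue by (simp add: linest_unbiased)
    also have "\<dots> \<le> Var n M a b (linest n d)"
      using Var_unbiased[OF d b] pos_def_mat_quad_nonneg[OF S_pd Smat_carrier, of "spacing_weights n d - blue_weights"]
      by (simp add: distrib_left)
    finally show "Var n M a b (linest n c) \<le> Var n M a b (linest n d)" .
  qed (use c in blast)
qed

lemma linest_invariant: "invariant2 n c \<Longrightarrow> linest n c = spacing_stat n (spacing_weights n c)"
  using n_ge_2 by (simp add: invariant2_iff linest_eq_spacing_stat)

lemma MSE2_invariant:
  assumes c: "invariant2 n c" and b: "b > 0"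
  shows "MSE2 n M a b (linest n c) = b\<^sup>2 * (1 - mvec n M \<bullet> (minv (Dmat n M) *\<^sub>v mvec n M)
    + (spacing_weights n c - blie_weights) \<bullet> (Dmat n M *\<^sub>v (spacing_weights n c - blie_weights)))"
  using c b pos_def_mat_shifted_quad[OF D_pd Dmat_carrier transpose_Dmat mvec_carrier spacing_weights_carrier]
  by (simp add: linest_invariant MSE2_spacing_stat blie_weights_def)

lemma MSE2_blie:
  assumes "b > 0"
  shows "MSE2 n M a b (spacing_stat n blie_weights) = (1 - mvec n M \<bullet> (minv (Dmat n M) *\<^sub>v mvec n M)) * b\<^sup>2"
proof -
  have "Dmat n M *\<^sub>v blie_weights = mvec n M"
    unfolding blie_weights_def by (rule pos_def_mat_mult_minv_vec[OF D_pd Dmat_carrier mvec_carrier])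
  moreover have "blie_weights \<bullet> mvec n M = mvec n M \<bullet> (minv (Dmat n M) *\<^sub>v mvec n M)"
    using comm_scalar_prod[OF blie_weights_carrier mvec_carrier] by (simp add: blie_weights_def)
  ultimately show ?thesis
    using assms by (simp add: MSE2_spacing_stat algebra_simps)
qed

lemma invariant2_blie: "invariant2 n (spacing_coeffs n blie_weights)"
  using sum_spacing_coeffs[OF n_ge_2] by (simp add: invariant2_iff)

lemma is_BLIE2_iff: "is_BLIE2 n M c \<longleftrightarrow> invariant2 n c \<and> spacing_weights n c = blie_weights"
proof
  assume BLIE: "is_BLIE2 n M c"
  then have c: "invariant2 n c" unfolding is_BLIE2_def by blast
  let ?\<delta> = "spacing_weights n c - blie_weights"
  have "MSE2 n M 0 1 (linest n c) \<le> MSE2 n M 0 1 (linest n (spacing_coeffs n blie_weights))"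
    using BLIE invariant2_blie unfolding is_BLIE2_def by auto
  then have "?\<delta> \<bullet> (Dmat n M *\<^sub>v ?\<delta>) \<le> 0"
    using MSE2_invariant[OF c, of 1 0] MSE2_blie[of 1 0] n_ge_2 by (simp add: linest_spacing_coeffs)
  then have "?\<delta> = 0\<^sub>v (n - 1)"
    by (intro pos_def_mat_quad_le_0_imp_zero[OF D_pd Dmat_carrier]) simp
  then show "invariant2 n c \<and> spacing_weights n c = blie_weights"
    using c by (simp add: minus_vec_eq_0_iff)
next
  assume c: "invariant2 n c \<and> spacing_weights n c = blie_weights"
  show "is_BLIE2 n M c"
    unfolding is_BLIE2_def
  proof (intro conjI allI impI)
    fix d a and b :: real assume d: "invariant2 n d" and b: "b > 0"
    have "MSE2 n M a b (linest n c) = (1 - mvec n M \<bullet> (minv (Dmat n M) *\<^sub>v mvec n M)) * b\<^sup>2"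
      using c b MSE2_blie by (simp add: linest_invariant)
    also have "\<dots> \<le> MSE2 n M a b (linest n d)"
      using MSE2_invariant[OF d b] pos_def_mat_quad_nonneg[OF D_pd Dmat_carrier, of "spacing_weights n d - blie_weights"]
      by (simp add: distrib_left mult.commute)
    finally show "MSE2 n M a b (linest n c) \<le> MSE2 n M a b (linest n d)" .
  qed (use c in blast)
qed

end

theorem proposition4p1:
  fixes n :: nat and M :: "real measure"
  assumes n2: "n \<ge> 2"
    and distr: "real_distribution M"
    and nondeg: "\<forall>c. measure M {c} \<noteq> 1"
    and finvar: "integrable M (\<lambda>x. x\<^sup>2)"
    and S_pd: "pos_def_mat (Smat n M)"
    and D_pd: "pos_def_mat (Dmat n M)"
  shows
    "(\<exists>c. is_BLUE2 n M c) \<and>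
     (\<forall>c. is_BLUE2 n M c \<longrightarrow>
        (\<forall>y. linform n c y =
           (mvec n M \<bullet> (minv (Smat n M) *\<^sub>v spacings n y)) /
           (mvec n M \<bullet> (minv (Smat n M) *\<^sub>v mvec n M)))) \<and>
     (\<forall>a b. b > 0 \<longrightarrow>
        Var n M a b (\<lambda>\<omega>. (mvec n M \<bullet> (minv (Smat n M) *\<^sub>v spacings n (\<lambda>j. pmax j \<omega>))) /
                          (mvec n M \<bullet> (minv (Smat n M) *\<^sub>v mvec n M)))
        = b\<^sup>2 / (mvec n M \<bullet> (minv (Smat n M) *\<^sub>v mvec n M))) \<and>
     (\<exists>c. is_BLIE2 n M c) \<and>
     (\<forall>c. is_BLIE2 n M c \<longrightarrow>
        (\<forall>y. linform n c y = mvec n M \<bullet> (minv (Dmat n M) *\<^sub>v spacings n y))) \<and>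
     (\<forall>a b. b > 0 \<longrightarrow>
        MSE2 n M a b (\<lambda>\<omega>. mvec n M \<bullet> (minv (Dmat n M) *\<^sub>v spacings n (\<lambda>j. pmax j \<omega>)))
        = (1 - mvec n M \<bullet> (minv (Dmat n M) *\<^sub>v mvec n M)) * b\<^sup>2)"
proof -
  interpret pos_def_spacing_moments n M
    using n2 distr finvar S_pd D_pd
    by (simp add: pos_def_spacing_moments_def pos_def_spacing_moments_axioms_def standard_sample_def)
  have spacings_carrier: "spacings n y \<in> carrier_vec (n - 1)" for y
    by (simp add: spacings_def)
  have blue: "linform n c y = blue_weights \<bullet> spacings n y" if "is_BLUE2 n M c" for c y
    using that n_ge_2 by (simp add: is_BLUE2_iff unbiased2_iff linform_eq_spacing_weights)
  have blie: "linform n c y = blie_weights \<bullet> spacings n y" if "is_BLIE2 n M c" for c y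
    using that n_ge_2 by (simp add: is_BLIE2_iff invariant2_iff linform_eq_spacing_weights)
  have "is_BLUE2 n M (spacing_coeffs n blue_weights)" "is_BLIE2 n M (spacing_coeffs n blie_weights)"
    by (simp_all add: is_BLUE2_iff unbiased2_blue is_BLIE2_iff invariant2_blie spacing_weights_spacing_coeffs)
  moreover note blue blie Var_blue MSE2_blie
  ultimately show ?thesis
    unfolding spacing_stat_def blue_weights_scalar_prod[OF spacings_carrier]
      blie_weights_scalar_prod[OF spacings_carrier] blue_precision_def
    by blast
qed

end
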